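(* Let $(L_1,\preceq_1,\bot_1,\top_1)$ and $(L_2,\preceq_2,\bot_2,\top_2)$ be complete lattices, $(P,\leq)$ a poset, and $(\&_i,\swarrow^i,\nwarrow_i)$, $i=1,\dots,n$, adjoint triples with respect to $L_1,L_2,P$. Let $(A,B,R,\sigma)$ be a context over this frame. Then for every $a\in A$, $b\in B$, $x\in L_1$ and $y\in L_2$, $$\langle \phi_{b,y}^{\uparrow\downarrow},\phi_{b,y}^{\uparrow}\rangle \preceq \langle \phi_{a,x}^{\downarrow},\phi_{a,x}^{\downarrow\uparrow}\rangle \quad\text{if and only if}\quad x\,\&_{\sigma(a,b)}\, y\leq R(a,b).$$
   Context: An adjoint triple with respect to posets $P_1,P_2,P_3$ is a triple of maps $\&\colon P_1\times P_2\to P_3$, $\swarrow\colon P_3\times P_2\to P_1$, $\nwarrow\colon P_3\times P_1\to P_2$ such that $x\le_1 z\swarrow y \iff x\& y\le_3 z\iff y\le_2 z\nwarrow x$ for all $x\in P_1,y\in P_2,z\in P_3$. A context is a tuple $(A,B,R,\sigma)$ with $A,B$ non-empty sets, $R\colon A\times B\to P$ and $\sigma\colon A\times B\to\{1,\dots,n\}$. For $g\colon B\to L_2$ and $f\colon A\to L_1$ define $g^\uparrow(a)=\inf\{R(a,b)\swarrow^{\sigma(a,b)} g(b)\mid b\in B\}$ and $f^\downarrow(b)=\inf\{R(a,b)\nwarrow_{\sigma(a,b)} f(a)\mid a\in A\}$. A concept is a pair $\langle g,f\rangle$ with $g^\uparrow=f$ and $f^\downarrow=g$; concepts are ordered by $\langle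 g_1,f_1\rangle\preceq\langle g_2,f_2\rangle$ iff $g_1\le g_2$ pointwise. For $a\in A$, $x\in L_1$, the fuzzy-attribute $\phi_{a,x}\colon A\to L_1$ takes value $x$ at $a$ and $\bot_1$ elsewhere; for $b\in B$, $y\in L_2$, the fuzzy-object $\phi_{b,y}\colon B\to L_2$ takes value $y$ at $b$ and $\bot_2$ elsewhere. *)

theory Defs
  imports Main
begin

definition adjoint_triple ::
  "('l1::order \<Rightarrow> 'l2::order \<Rightarrow> 'p::order) \<Rightarrow> ('p \<Rightarrow> 'l2 \<Rightarrow> 'l1) \<Rightarrow> ('p \<Rightarrow> 'l1 \<Rightarrow> 'l2) \<Rightarrow> bool" where
  "adjoint_triple tn ls rs \<longleftrightarrow>
     (\<forall>x y z. (x \<le> ls z y \<longleftrightarrow> tn x y \<le> z) \<and> (tn x y \<le> z \<longleftrightarrow> y \<le> rs z x))"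

definition is_context :: "nat \<Rightarrow> 'a set \<Rightarrow> 'b set \<Rightarrow> ('a \<Rightarrow> 'b \<Rightarrow> 'p) \<Rightarrow> ('a \<Rightarrow> 'b \<Rightarrow> nat) \<Rightarrow> bool" where
  "is_context n A B R \<sigma> \<longleftrightarrow> A \<noteq> {} \<and> B \<noteq> {} \<and> (\<forall>a\<in>A. \<forall>b\<in>B. \<sigma> a b \<in> {1..n})"

text \<open>Derivation operators; ls i = \<swarrow>^i, rs i = \<nwarrow>_i.\<close>
definition up_op :: "'a set \<Rightarrow> 'b set \<Rightarrow> ('a \<Rightarrow> 'b \<Rightarrow> 'p) \<Rightarrow> ('a \<Rightarrow> 'b \<Rightarrow> nat)
    \<Rightarrow> (nat \<Rightarrow> 'p \<Rightarrow> 'l2 \<Rightarrow> 'l1::complete_lattice) \<Rightarrow> ('b \<Rightarrow> 'l2) \<Rightarrow> ('a \<Rightarrow> 'l1)" where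
  "up_op A B R \<sigma> ls g = (\<lambda>a. Inf {ls (\<sigma> a b) (R a b) (g b) | b. b \<in> B})"

definition down_op :: "'a set \<Rightarrow> 'b set \<Rightarrow> ('a \<Rightarrow> 'b \<Rightarrow> 'p) \<Rightarrow> ('a \<Rightarrow> 'b \<Rightarrow> nat)
    \<Rightarrow> (nat \<Rightarrow> 'p \<Rightarrow> 'l1 \<Rightarrow> 'l2::complete_lattice) \<Rightarrow> ('a \<Rightarrow> 'l1) \<Rightarrow> ('b \<Rightarrow> 'l2)" where
  "down_op A B R \<sigma> rs f = (\<lambda>b. Inf {rs (\<sigma> a b) (R a b) (f a) | a. a \<in> A})"

definition phi :: "'c \<Rightarrow> 'l::complete_lattice \<Rightarrow> 'c \<Rightarrow> 'l" where
  "phi c v = (\<lambda>c'. if c' = c then v else bot)"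

text \<open>Concepts: functions compared on the carriers A and B only.\<close>
definition is_concept :: "'a set \<Rightarrow> 'b set \<Rightarrow> ('a \<Rightarrow> 'b \<Rightarrow> 'p) \<Rightarrow> ('a \<Rightarrow> 'b \<Rightarrow> nat)
    \<Rightarrow> (nat \<Rightarrow> 'p \<Rightarrow> 'l2 \<Rightarrow> 'l1::complete_lattice) \<Rightarrow> (nat \<Rightarrow> 'p \<Rightarrow> 'l1 \<Rightarrow> 'l2::complete_lattice)
    \<Rightarrow> ('b \<Rightarrow> 'l2) \<Rightarrow> ('a \<Rightarrow> 'l1) \<Rightarrow> bool" where
  "is_concept A B R \<sigma> ls rs g f \<longleftrightarrow>
     (\<forall>a\<in>A. up_op A B R \<sigma> ls g a = f a) \<and> (\<forall>b\<in>B. down_op A B R \<sigma> rs f b = g b)"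

definition concept_le :: "'b set \<Rightarrow> ('b \<Rightarrow> 'l2::order) \<times> ('a \<Rightarrow> 'l1) \<Rightarrow> ('b \<Rightarrow> 'l2) \<times> ('a \<Rightarrow> 'l1) \<Rightarrow> bool" where
  "concept_le B C1 C2 \<longleftrightarrow> (\<forall>b\<in>B. fst C1 b \<le> fst C2 b)"

end

theory Submission
  imports Defs
begin

text \<open>Each pair of residuated implications is an antitone Galois connection, hence so is
  the pair of derivation operators. Thus the extent of the concept generated by g lies below
  f\<down> iff g itself does. For g = phi b y and f = phi a x this means y \<le> (phi a x)\<down> b, and
  that infimum is just R(a,b) \<nwarrow> x, because every other term is R(a',b) \<nwarrow> \<bottom> = \<top>.
  Adjointness turns y \<le> R(a,b) \<nwarrow> x into x & y \<le> R(a,b).\<close>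

lemma adjoint_triple_residuation:
  "adjoint_triple tn ls rs \<Longrightarrow> x \<le> ls z y \<longleftrightarrow> y \<le> rs z x"
  unfolding adjoint_triple_def by blast

lemma adjoint_triple_le_iff:
  "adjoint_triple tn ls rs \<Longrightarrow> tn x y \<le> z \<longleftrightarrow> y \<le> rs z x"
  unfolding adjoint_triple_def by blast

lemma phi_le_on_iff:
  "b \<in> B \<Longrightarrow> (\<forall>b'\<in>B. phi b y b' \<le> g b') \<longleftrightarrow> y \<le> g b"
  unfolding phi_def by auto

locale residuated_context =
  fixes A :: "'a set" and B :: "'b set" and R :: "'a \<Rightarrow> 'b \<Rightarrow> 'p"
    and \<sigma> :: "'a \<Rightarrow> 'b \<Rightarrow> nat"
    and ls :: "nat \<Rightarrow> 'p \<Rightarrow> 'l2::complete_lattice \<Rightarrow> 'l1::complete_lattice"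
    and rs :: "nat \<Rightarrow> 'p \<Rightarrow> 'l1 \<Rightarrow> 'l2"
  assumes residuation:
    "a \<in> A \<Longrightarrow> b \<in> B \<Longrightarrow> u \<le> ls (\<sigma> a b) (R a b) v \<longleftrightarrow> v \<le> rs (\<sigma> a b) (R a b) u"
begin

abbreviation up :: "('b \<Rightarrow> 'l2) \<Rightarrow> 'a \<Rightarrow> 'l1" where
  "up \<equiv> up_op A B R \<sigma> ls"

abbreviation down :: "('a \<Rightarrow> 'l1) \<Rightarrow> 'b \<Rightarrow> 'l2" where
  "down \<equiv> down_op A B R \<sigma> rs"

lemma le_up_iff_le_down:
  "(\<forall>a\<in>A. f a \<le> up g a) \<longleftrightarrow> (\<forall>b\<in>B. g b \<le> down f b)"
proof -
  have "(\<forall>a\<in>A. f a \<le> up g a) \<longleftrightarrow> (\<forall>a\<in>A. \<forall>b\<in>B. f a \<le> ls (\<sigma> a b) (R a b) (g b))"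
    by (auto simp: up_op_def le_Inf_iff)
  also have "\<dots> \<longleftrightarrow> (\<forall>b\<in>B. \<forall>a\<in>A. g b \<le> rs (\<sigma> a b) (R a b) (f a))"
    using residuation by blast
  also have "\<dots> \<longleftrightarrow> (\<forall>b\<in>B. g b \<le> down f b)"
    by (auto simp: down_op_def le_Inf_iff)
  finally show ?thesis .
qed

lemma le_down_up: "b \<in> B \<Longrightarrow> g b \<le> down (up g) b"
  using le_up_iff_le_down[of "up g" g] by blast

lemma down_antimono_on:
  assumes "\<forall>a\<in>A. f a \<le> f' a" and "b \<in> B"
  shows "down f' b \<le> down f b"
proof -
  have "\<forall>a\<in>A. f' a \<le> up (down f') a"
    using le_up_iff_le_down by blast
  with assms(1) have "\<forall>a\<in>A. f a \<le> up (down f') a"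
    using order_trans by blast
  with assms(2) show ?thesis
    using le_up_iff_le_down by blast
qed

lemma down_up_le_down_iff:
  "(\<forall>b\<in>B. down (up g) b \<le> down f b) \<longleftrightarrow> (\<forall>b\<in>B. g b \<le> down f b)"
proof
  assume "\<forall>b\<in>B. down (up g) b \<le> down f b"
  then show "\<forall>b\<in>B. g b \<le> down f b"
    using le_down_up order_trans by blast
next
  assume "\<forall>b\<in>B. g b \<le> down f b"
  then show "\<forall>b\<in>B. down (up g) b \<le> down f b"
    using le_up_iff_le_down down_antimono_on by blast
qed

lemma rs_bot_eq_top:
  "a \<in> A \<Longrightarrow> b \<in> B \<Longrightarrow> rs (\<sigma> a b) (R a b) bot = top"
  using residuation[of a b bot top] by (simp add: top_unique)

lemma down_phi:
  assumes "a \<in> A" and "b \<in> B"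
  shows "down (phi a x) b = rs (\<sigma> a b) (R a b) x"
proof (rule antisym)
  show "down (phi a x) b \<le> rs (\<sigma> a b) (R a b) x"
    unfolding down_op_def phi_def by (rule Inf_lower) (use assms(1) in force)
  show "rs (\<sigma> a b) (R a b) x \<le> down (phi a x) b"
    unfolding down_op_def phi_def by (rule Inf_greatest) (auto simp: rs_bot_eq_top assms(2))
qed

end

theorem corollary14:
  fixes n :: nat
    and tn :: "nat \<Rightarrow> 'l1::complete_lattice \<Rightarrow> 'l2::complete_lattice \<Rightarrow> 'p::order"
    and ls :: "nat \<Rightarrow> 'p \<Rightarrow> 'l2 \<Rightarrow> 'l1"
    and rs :: "nat \<Rightarrow> 'p \<Rightarrow> 'l1 \<Rightarrow> 'l2"
    and A :: "'a set" and B :: "'b set"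
    and R :: "'a \<Rightarrow> 'b \<Rightarrow> 'p" and \<sigma> :: "'a \<Rightarrow> 'b \<Rightarrow> nat"
    and a :: 'a and b :: 'b and x :: 'l1 and y :: 'l2
  assumes adj: "\<And>i. i \<in> {1..n} \<Longrightarrow> adjoint_triple (tn i) (ls i) (rs i)"
    and ctx: "is_context n A B R \<sigma>"
    and aA: "a \<in> A" and bB: "b \<in> B"
  shows "concept_le B
           (down_op A B R \<sigma> rs (up_op A B R \<sigma> ls (phi b y)), up_op A B R \<sigma> ls (phi b y))
           (down_op A B R \<sigma> rs (phi a x), up_op A B R \<sigma> ls (down_op A B R \<sigma> rs (phi a x)))
         \<longleftrightarrow> tn (\<sigma> a b) x y \<le> R a b"
proof -
  have adj_on_context: "adjoint_triple (tn (\<sigma> a' b')) (ls (\<sigma> a' b')) (rs (\<sigma> a' b'))"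
    if "a' \<in> A" and "b' \<in> B" for a' b'
    using adj ctx that unfolding is_context_def by blast
  interpret residuated_context A B R \<sigma> ls rs
    by unfold_locales (use adj_on_context adjoint_triple_residuation in blast)
  have "concept_le B (down (up (phi b y)), up (phi b y)) (down (phi a x), up (down (phi a x)))
      \<longleftrightarrow> (\<forall>b'\<in>B. phi b y b' \<le> down (phi a x) b')"
    by (simp add: concept_le_def down_up_le_down_iff)
  also have "\<dots> \<longleftrightarrow> y \<le> rs (\<sigma> a b) (R a b) x"
    by (simp add: phi_le_on_iff bB down_phi aA)
  also have "\<dots> \<longleftrightarrow> tn (\<sigma> a b) x y \<le> R a b"
    using adjoint_triple_le_iff[OF adj_on_context[OF aA bB]] by simp
  finally show ?thesis .
qed

end
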